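(* Let $\kappa>0$, $u_0>0$, and consider the sessile liquid channel with parameter $u_0$ and contact angle $\gamma$ resting on $\Pi$, with volume $\mathcal V(\gamma)$. Let $a=r(\gamma)$ and $R=r(\pi/2)$. If $0<\gamma\le\pi/2$, then $$\mathcal V(\gamma)<\frac{a^2}{\sin^2\gamma}(\gamma-\sin\gamma\cos\gamma).$$ If $\pi/2\le\gamma\le\pi$, then $$\mathcal V(\gamma)<R^2(\gamma-\sin\gamma\cos\gamma).$$
   Context: For $u_0>0$, $(r(\psi),u(\psi))$, $\psi\in[0,\pi]$, is the solution of $\frac{dr}{d\psi}=\frac{\cos\psi}{\kappa u}$, $\frac{du}{d\psi}=\frac{\sin\psi}{\kappa u}$, $r(0)=0$, $u(0)=u_0$ (profile of a $\kappa$-cylindrical surface parametrized by inclination angle $\psi$). The channel with contact angle $\gamma$ is the arc $\psi\in[0,\gamma]$ reflected in $r\mapsto-r$, resting on the line $u=u(\gamma)$; $2R$ is its maximal width (where it is vertical). Its volume per unit length is $\mathcal V(\gamma)=2\big(r(\gamma)u(\gamma)-\frac{\sin\gamma}\kappa\big)$. *)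

theory Defs
  imports Complex_Main
begin

text \<open>Profile (r,u) of a kappa-cylindrical surface parametrized by inclination angle psi in [0,pi]:
  r' = cos psi / (kappa u), u' = sin psi / (kappa u), r(0)=0, u(0)=u0.\<close>
definition kappa_profile :: "real \<Rightarrow> real \<Rightarrow> (real \<Rightarrow> real) \<Rightarrow> (real \<Rightarrow> real) \<Rightarrow> bool" where
  "kappa_profile \<kappa> u0 r u \<longleftrightarrow>
     r 0 = 0 \<and> u 0 = u0 \<and>
     (\<forall>\<psi>\<in>{0..pi}.
        (r has_real_derivative (cos \<psi> / (\<kappa> * u \<psi>))) (at \<psi> within {0..pi}) \<and>
        (u has_real_derivative (sin \<psi> / (\<kappa> * u \<psi>))) (at \<psi> within {0..pi}))"

definition channel_volume :: "real \<Rightarrow> (real \<Rightarrow> real) \<Rightarrow> (real \<Rightarrow> real) \<Rightarrow> real \<Rightarrow> real" where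
  "channel_volume \<kappa> r u \<gamma> = 2 * (r \<gamma> * u \<gamma> - sin \<gamma> / \<kappa>)"

end

theory Submission
  imports Defs
begin

text \<open>Compare the channel with circular ones. The cap of a circle of radius \<open>\<rho>\<close> over a chord of
  half-length \<open>x \<le> \<rho>\<close> has area \<open>\<rho>\<^sup>2 S(x/\<rho>)\<close>, where \<open>S = circular_segment\<close> and
  \<open>S (sin \<gamma>) = \<gamma> - sin \<gamma> cos \<gamma>\<close>. Along the profile \<open>V' = 2 r sin \<psi> / (\<kappa> u)\<close>, whereas the cap of
  radius \<open>\<rho>\<close> over the half-width \<open>r(\<psi>)\<close> grows strictly faster as long as \<open>\<rho> sin \<psi> < r(\<psi>) < \<rho>\<close>.
  For \<open>\<gamma> \<le> pi/2\<close> take \<open>\<rho> = r(\<gamma>) / sin \<gamma>\<close>; the condition holds since \<open>r / sin\<close> decreases,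
  which in turn follows from \<open>r > sin \<psi> / (\<kappa> u)\<close>. For \<open>\<gamma> \<ge> pi/2\<close> take \<open>\<rho> = R\<close> and compare on
  \<open>[pi/2, \<gamma>]\<close> with the large cap, of area \<open>R\<^sup>2 (pi - S(r/R))\<close>; the first bound at \<open>pi/2\<close>
  then finishes the estimate.\<close>

lemma cos_lt_zero: "pi/2 < x \<Longrightarrow> x < 3 * pi/2 \<Longrightarrow> cos x < 0"
  using cos_gt_zero_pi[of "x - pi"] by (simp add: cos_diff)

definition circular_segment :: "real \<Rightarrow> real" where
  "circular_segment x = arcsin x - x * sqrt (1 - x\<^sup>2)"

lemma circular_segment_deriv:
  assumes "-1 < x" "x < 1"
  shows "(circular_segment has_real_derivative 2 * x\<^sup>2 / sqrt (1 - x\<^sup>2)) (at x)"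
proof -
  have pos: "0 < 1 - x\<^sup>2" using assms by (simp add: abs_square_less_1)
  have "(circular_segment has_real_derivative
      inverse (sqrt (1 - x\<^sup>2)) - (sqrt (1 - x\<^sup>2) + x * (inverse (sqrt (1 - x\<^sup>2)) / 2 * (- 2 * x)))) (at x)"
    unfolding circular_segment_def[abs_def] using assms pos
    by (auto intro!: derivative_eq_intros DERIV_arcsin simp: power2_eq_square)
  moreover have "sqrt (1 - x\<^sup>2) * sqrt (1 - x\<^sup>2) = 1 - x\<^sup>2" using pos by simp
  ultimately show ?thesis using pos by (simp add: field_simps power2_eq_square)
qed

lemma continuous_on_circular_segment: "continuous_on {-1..1} circular_segment"
  unfolding circular_segment_def[abs_def] by (auto intro!: continuous_intros)

lemma circular_segment_mono:
  assumes "-1 \<le> a" "a \<le> b" "b \<le> 1"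
  shows "circular_segment a \<le> circular_segment b"
proof (rule DERIV_nonneg_imp_increasing_open[OF assms(2)])
  show "continuous_on {a..b} circular_segment"
    using continuous_on_subset[OF continuous_on_circular_segment] assms by auto
  fix x assume "a < x" "x < b"
  then show "\<exists>y. (circular_segment has_real_derivative y) (at x) \<and> 0 \<le> y"
    using circular_segment_deriv[of x] assms by (auto simp: abs_square_le_1)
qed

lemma circular_segment_sin:
  assumes "-(pi/2) \<le> \<gamma>" "\<gamma> \<le> pi/2"
  shows "circular_segment (sin \<gamma>) = \<gamma> - sin \<gamma> * cos \<gamma>"
proof -
  have "0 \<le> cos \<gamma>" using assms by (auto intro!: cos_ge_zero)
  then show ?thesis
    using assms by (simp add: circular_segment_def arcsin_sin cos_squared_eq[symmetric])
qed

lemma circular_segment_sin_obtuse: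
  assumes "pi/2 \<le> \<gamma>" "\<gamma> \<le> pi"
  shows "circular_segment (sin \<gamma>) = pi - \<gamma> + sin \<gamma> * cos \<gamma>"
  using circular_segment_sin[of "pi - \<gamma>"] assms by simp

lemma scaled_circular_segment_deriv:
  assumes f: "(f has_real_derivative f') (at t)" and \<rho>: "0 < \<rho>" "\<bar>f t\<bar> < \<rho>"
  shows "((\<lambda>s. \<rho>\<^sup>2 * circular_segment (f s / \<rho>)) has_real_derivative
           2 * (f t)\<^sup>2 * f' / sqrt (\<rho>\<^sup>2 - (f t)\<^sup>2)) (at t)"
proof -
  have x: "-1 < f t / \<rho>" "f t / \<rho> < 1" using \<rho> by (auto simp: field_simps abs_less_iff)
  have "((\<lambda>s. f s / \<rho>) has_real_derivative f' / \<rho>) (at t)"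
    using f by (rule DERIV_cdivide)
  from DERIV_chain2[OF circular_segment_deriv[OF x] this]
  have "((\<lambda>s. \<rho>\<^sup>2 * circular_segment (f s / \<rho>)) has_real_derivative
           \<rho>\<^sup>2 * (2 * (f t / \<rho>)\<^sup>2 / sqrt (1 - (f t / \<rho>)\<^sup>2) * (f' / \<rho>))) (at t)"
    by (rule DERIV_cmult)
  moreover have "sqrt (1 - (f t / \<rho>)\<^sup>2) = sqrt (\<rho>\<^sup>2 - (f t)\<^sup>2) / \<rho>"
    using \<rho> by (simp add: field_simps power_divide real_sqrt_divide)
  ultimately show ?thesis using \<rho> by (simp add: field_simps power2_eq_square)
qed

lemma sin_mult_sqrt_less:
  fixes \<rho> r t :: real
  assumes "0 \<le> sin t" "\<rho> * sin t < r" "r \<le> \<rho>"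
  shows "sin t * sqrt (\<rho>\<^sup>2 - r\<^sup>2) < r * \<bar>cos t\<bar>"
proof -
  have "0 < \<rho>"
  proof (rule ccontr)
    assume "\<not> 0 < \<rho>"
    then have "\<rho> \<le> \<rho> * sin t" using sin_le_one[of t] by (simp add: mult_le_cancel_left1)
    then show False using assms by linarith
  qed
  then have "0 \<le> \<rho> * sin t" using assms by simp
  then have r: "0 < r" "(\<rho> * sin t)\<^sup>2 < r\<^sup>2" using assms by (auto intro: power_strict_mono)
  then have "r\<^sup>2 \<le> \<rho>\<^sup>2" using assms by (simp add: power_mono)
  then have "(sin t * sqrt (\<rho>\<^sup>2 - r\<^sup>2))\<^sup>2 = (\<rho> * sin t)\<^sup>2 - r\<^sup>2 * (sin t)\<^sup>2"
    by (simp add: power_mult_distrib algebra_simps)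
  also have "\<dots> < r\<^sup>2 - r\<^sup>2 * (sin t)\<^sup>2" using r by linarith
  also have "\<dots> = (r * \<bar>cos t\<bar>)\<^sup>2" by (simp add: power_mult_distrib cos_squared_eq algebra_simps)
  finally show ?thesis by (rule power2_less_imp_less) (use r in simp)
qed

locale channel_profile =
  fixes \<kappa> u0 :: real and r u :: "real \<Rightarrow> real"
  assumes kappa_pos: "0 < \<kappa>" and u0_pos: "0 < u0" and profile: "kappa_profile \<kappa> u0 r u"
begin

abbreviation V :: "real \<Rightarrow> real" where
  "V \<equiv> channel_volume \<kappa> r u"

lemma r_zero: "r 0 = 0" and u_zero: "u 0 = u0"
  using profile unfolding kappa_profile_def by auto

lemma r_deriv_within: "\<psi> \<in> {0..pi} \<Longrightarrow>
    (r has_real_derivative cos \<psi> / (\<kappa> * u \<psi>)) (at \<psi> within {0..pi})"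
  and u_deriv_within: "\<psi> \<in> {0..pi} \<Longrightarrow>
    (u has_real_derivative sin \<psi> / (\<kappa> * u \<psi>)) (at \<psi> within {0..pi})"
  using profile unfolding kappa_profile_def by auto

lemma r_deriv: "0 < \<psi> \<Longrightarrow> \<psi> < pi \<Longrightarrow> (r has_real_derivative cos \<psi> / (\<kappa> * u \<psi>)) (at \<psi>)"
  and u_deriv: "0 < \<psi> \<Longrightarrow> \<psi> < pi \<Longrightarrow> (u has_real_derivative sin \<psi> / (\<kappa> * u \<psi>)) (at \<psi>)"
  using r_deriv_within[of \<psi>] u_deriv_within[of \<psi>] at_within_Icc_at[of 0 \<psi> pi] by auto

lemma continuous_on_r: "0 \<le> a \<Longrightarrow> b \<le> pi \<Longrightarrow> continuous_on {a..b} r"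
  and continuous_on_u: "0 \<le> a \<Longrightarrow> b \<le> pi \<Longrightarrow> continuous_on {a..b} u"
  using continuous_on_subset[OF DERIV_continuous_on[OF r_deriv_within]]
    continuous_on_subset[OF DERIV_continuous_on[OF u_deriv_within]] by auto

lemma u_pos:
  assumes "0 \<le> \<psi>" "\<psi> \<le> pi"
  shows "0 < u \<psi>"
proof -
  have u_nonzero: "u x \<noteq> 0" if x: "0 \<le> x" "x \<le> pi" for x
  proof -
    \<comment> \<open>Since division by zero yields zero, the derivative of \<open>u\<^sup>2\<close> is \<open>2 sin / \<kappa>\<close> or \<open>0\<close>.\<close>
    have "(u 0)\<^sup>2 \<le> (u x)\<^sup>2"
    proof (rule DERIV_nonneg_imp_increasing_open[of 0 x "\<lambda>t. (u t)\<^sup>2"])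
      show "continuous_on {0..x} (\<lambda>t. (u t)\<^sup>2)"
        using continuous_on_u[of 0 x] x by (auto intro!: continuous_intros)
      fix t assume t: "0 < t" "t < x"
      have "((\<lambda>t. (u t)\<^sup>2) has_real_derivative 2 * u t * (sin t / (\<kappa> * u t))) (at t)"
        using u_deriv[of t] t x by (auto intro!: derivative_eq_intros)
      moreover have "0 \<le> sin t" using t x by (auto intro!: sin_ge_zero)
      ultimately show "\<exists>y. ((\<lambda>t. (u t)\<^sup>2) has_real_derivative y) (at t) \<and> 0 \<le> y"
        using kappa_pos by (cases "u t = 0") auto
    qed (use x in auto)
    then show ?thesis using u_zero u0_pos by auto
  qed
  show ?thesis
  proof (rule ccontr)
    assume "\<not> 0 < u \<psi>"
    then obtain x where "0 \<le> x" "x \<le> \<psi>" "u x = 0"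
      using IVT2'[of u \<psi> 0 0] continuous_on_u[of 0 \<psi>] assms u_zero u0_pos by auto
    then show False using u_nonzero[of x] assms by auto
  qed
qed

lemma u_strict_mono:
  assumes "0 \<le> a" "a < b" "b \<le> pi"
  shows "u a < u b"
proof (rule DERIV_pos_imp_increasing_open[OF assms(2)])
  show "continuous_on {a..b} u" using continuous_on_u assms by auto
  fix t assume "a < t" "t < b"
  then show "\<exists>y. (u has_real_derivative y) (at t) \<and> 0 < y"
    using u_deriv[of t] u_pos[of t] sin_gt_zero[of t] kappa_pos assms by auto
qed

lemma r_strict_mono:
  assumes "0 \<le> a" "a < b" "b \<le> pi/2"
  shows "r a < r b"
proof (rule DERIV_pos_imp_increasing_open[OF assms(2)])
  show "continuous_on {a..b} r" using continuous_on_r assms by auto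
  fix t assume "a < t" "t < b"
  then show "\<exists>y. (r has_real_derivative y) (at t) \<and> 0 < y"
    using r_deriv[of t] u_pos[of t] cos_gt_zero[of t] kappa_pos assms by auto
qed

lemma r_strict_antimono:
  assumes "pi/2 \<le> a" "a < b" "b \<le> pi"
  shows "r b < r a"
proof (rule DERIV_neg_imp_decreasing_open[OF assms(2)])
  show "continuous_on {a..b} r" using continuous_on_r assms by auto
  fix t assume "a < t" "t < b"
  then show "\<exists>y. (r has_real_derivative y) (at t) \<and> y < 0"
    using r_deriv[of t] u_pos[of t] cos_lt_zero[of t] kappa_pos assms
    by (auto simp: divide_neg_pos)
qed

lemma sin_div_less_r:
  assumes "0 < \<psi>" "\<psi> \<le> pi/2"
  shows "sin \<psi> / (\<kappa> * u \<psi>) < r \<psi>"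
proof -
  let ?D = "\<lambda>t. r t - sin t / (\<kappa> * u \<psi>)"
  have "?D 0 < ?D \<psi>"
  proof (rule DERIV_pos_imp_increasing_open[OF assms(1)])
    show "continuous_on {0..\<psi>} ?D"
      using continuous_on_r[of 0 \<psi>] u_pos[of \<psi>] assms kappa_pos
      by (auto intro!: continuous_intros)
    fix t assume t: "0 < t" "t < \<psi>"
    have "((\<lambda>t. r t - sin t / (\<kappa> * u \<psi>)) has_real_derivative
        cos t / (\<kappa> * u t) - cos t / (\<kappa> * u \<psi>)) (at t)"
      using r_deriv[of t] u_pos[of \<psi>] t assms kappa_pos by (auto intro!: derivative_eq_intros)
    moreover have "cos t / (\<kappa> * u \<psi>) < cos t / (\<kappa> * u t)"
      using u_strict_mono[of t \<psi>] u_pos[of t] cos_gt_zero[of t] t assms kappa_pos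
      by (auto intro!: divide_strict_left_mono mult_strict_left_mono)
    ultimately show "\<exists>y. (?D has_real_derivative y) (at t) \<and> 0 < y" by auto
  qed
  then show ?thesis using r_zero by simp
qed

lemma r_div_sin_strict_antimono:
  assumes "0 < a" "a < b" "b \<le> pi/2"
  shows "r b * sin a < r a * sin b"
proof -
  have sin_pos: "0 < sin t" if "a \<le> t" "t \<le> b" for t
    using that assms by (auto intro!: sin_gt_zero)
  have "r b / sin b < r a / sin a"
  proof (rule DERIV_neg_imp_decreasing_open[OF assms(2)])
    show "continuous_on {a..b} (\<lambda>t. r t / sin t)"
      using continuous_on_r[of a b] assms sin_pos
      by (auto intro!: continuous_intros simp: less_imp_neq[symmetric])
    fix t assume t: "a < t" "t < b"
    have "((\<lambda>t. r t / sin t) has_real_derivative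
        (cos t / (\<kappa> * u t) * sin t - r t * cos t) / (sin t * sin t)) (at t)"
      using r_deriv[of t] t assms sin_pos[of t]
      by (auto intro!: derivative_eq_intros simp: power2_eq_square)
    moreover have "cos t / (\<kappa> * u t) * sin t - r t * cos t < 0"
      using sin_div_less_r[of t] u_pos[of t] cos_gt_zero[of t] t assms kappa_pos
      by (simp add: field_simps)
    ultimately show "\<exists>y. ((\<lambda>t. r t / sin t) has_real_derivative y) (at t) \<and> y < 0"
      using sin_pos[of t] t by (auto simp: divide_neg_pos)
  qed
  then show ?thesis using sin_pos[of a] sin_pos[of b] assms by (simp add: field_simps)
qed

lemma R_mult_sin_less_r:
  assumes "pi/2 < \<psi>" "\<psi> \<le> pi"
  shows "r (pi/2) * sin \<psi> < r \<psi>"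
proof -
  let ?D = "\<lambda>t. r t - r (pi/2) * sin t"
  have "?D (pi/2) < ?D \<psi>"
  proof (rule DERIV_pos_imp_increasing_open[OF assms(1)])
    show "continuous_on {pi/2..\<psi>} ?D"
      using continuous_on_r[of "pi/2" \<psi>] assms by (auto intro!: continuous_intros)
    fix t assume t: "pi/2 < t" "t < \<psi>"
    have "(?D has_real_derivative cos t * (1 / (\<kappa> * u t) - r (pi/2))) (at t)"
      using r_deriv[of t] t assms by (auto intro!: derivative_eq_intros simp: field_simps)
    moreover have "1 / (\<kappa> * u t) < 1 / (\<kappa> * u (pi/2))"
      using u_strict_mono[of "pi/2" t] u_pos[of "pi/2"] t assms kappa_pos
      by (auto intro!: divide_strict_left_mono mult_strict_left_mono)
    moreover have "1 / (\<kappa> * u (pi/2)) < r (pi/2)" using sin_div_less_r[of "pi/2"] by simp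
    moreover have "cos t < 0" using cos_lt_zero[of t] t assms by simp
    ultimately show "\<exists>y. (?D has_real_derivative y) (at t) \<and> 0 < y"
      by (auto intro!: mult_neg_neg)
  qed
  then show ?thesis by simp
qed

lemma volume_deriv:
  assumes "0 < \<psi>" "\<psi> < pi"
  shows "(V has_real_derivative 2 * r \<psi> * sin \<psi> / (\<kappa> * u \<psi>)) (at \<psi>)"
proof -
  have "(V has_real_derivative
      2 * (cos \<psi> / (\<kappa> * u \<psi>) * u \<psi> + r \<psi> * (sin \<psi> / (\<kappa> * u \<psi>)) - cos \<psi> / \<kappa>)) (at \<psi>)"
    unfolding channel_volume_def[abs_def] using r_deriv u_deriv assms kappa_pos
    by (auto intro!: derivative_eq_intros)
  then show ?thesis using u_pos[of \<psi>] assms kappa_pos by (simp add: field_simps)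
qed

lemma continuous_on_volume: "0 \<le> a \<Longrightarrow> b \<le> pi \<Longrightarrow> continuous_on {a..b} V"
  unfolding channel_volume_def[abs_def]
  using continuous_on_r continuous_on_u kappa_pos by (auto intro!: continuous_intros)

lemma r_mono: "0 \<le> a \<Longrightarrow> a \<le> b \<Longrightarrow> b \<le> pi/2 \<Longrightarrow> r a \<le> r b"
  using r_strict_mono[of a b] by (cases "a = b") auto

lemma r_antimono: "pi/2 \<le> a \<Longrightarrow> a \<le> b \<Longrightarrow> b \<le> pi \<Longrightarrow> r b \<le> r a"
  using r_strict_antimono[of a b] by (cases "a = b") auto

lemma r_pos:
  assumes "0 < \<psi>" "\<psi> \<le> pi"
  shows "0 < r \<psi>"
proof (cases "\<psi> \<le> pi/2")
  case True
  then show ?thesis using r_strict_mono[of 0 \<psi>] r_zero assms by simp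
next
  case False
  have "0 < r (pi/2)" using r_strict_mono[of 0 "pi/2"] r_zero by simp
  moreover have "0 \<le> sin \<psi>" using assms by (simp add: sin_ge_zero)
  ultimately show ?thesis using R_mult_sin_less_r[of \<psi>] False assms
    by (smt (verit) mult_nonneg_nonneg)
qed

text \<open>With \<open>\<sigma> = 1\<close> this compares \<open>V\<close> with the small cap, with \<open>\<sigma> = -1\<close> with the large one
  (up to the constant \<open>\<rho>\<^sup>2 pi\<close>).\<close>
lemma volume_defect_strict_mono:
  assumes ab: "0 \<le> a" "a < b" "b \<le> pi" and \<rho>: "0 < \<rho>"
    and range: "\<And>t. a \<le> t \<Longrightarrow> t \<le> b \<Longrightarrow> 0 \<le> r t \<and> r t \<le> \<rho>"
    and below: "\<And>t. a < t \<Longrightarrow> t < b \<Longrightarrow> \<rho> * sin t < r t \<and> r t < \<rho>"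
    and sign: "\<And>t. a < t \<Longrightarrow> t < b \<Longrightarrow> \<sigma> * cos t = \<bar>cos t\<bar>"
  shows "\<sigma> * \<rho>\<^sup>2 * circular_segment (r a / \<rho>) - V a < \<sigma> * \<rho>\<^sup>2 * circular_segment (r b / \<rho>) - V b"
proof -
  let ?H = "\<lambda>t. \<sigma> * (\<rho>\<^sup>2 * circular_segment (r t / \<rho>)) - V t"
  have "?H a < ?H b"
  proof (rule DERIV_pos_imp_increasing_open[OF ab(2)])
    have "continuous_on {a..b} (\<lambda>t. r t / \<rho>)"
      using continuous_on_r[OF ab(1,3)] \<rho> by (auto intro!: continuous_intros)
    moreover have "r t / \<rho> \<in> {-1..1}" if "t \<in> {a..b}" for t
      using range[of t] \<rho> that by (auto simp: field_simps)
    ultimately have "continuous_on {a..b} (\<lambda>t. circular_segment (r t / \<rho>))"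
      by (intro continuous_on_compose2[OF continuous_on_circular_segment]) auto
    then show "continuous_on {a..b} ?H"
      using continuous_on_volume[OF ab(1,3)] by (auto intro!: continuous_intros)
    fix t assume t: "a < t" "t < b"
    define s where "s = sqrt (\<rho>\<^sup>2 - (r t)\<^sup>2)"
    have r_t: "\<rho> * sin t < r t" "r t < \<rho>" using below[OF t] by auto
    have sin_t: "0 < sin t" using t ab by (simp add: sin_gt_zero)
    then have "0 < r t" using r_t \<rho> by (smt (verit) mult_pos_pos)
    then have "0 < s" unfolding s_def using r_t by (simp add: power_strict_mono)
    have "0 < u t" using u_pos[of t] t ab by simp
    then have G: "0 < \<kappa> * u t" using kappa_pos by simp
    have "(?H has_real_derivative
        \<sigma> * (2 * (r t)\<^sup>2 * (cos t / (\<kappa> * u t)) / s) - 2 * r t * sin t / (\<kappa> * u t)) (at t)"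
      unfolding s_def using t ab \<open>0 < r t\<close> r_t
      by (intro DERIV_diff DERIV_cmult scaled_circular_segment_deriv r_deriv volume_deriv \<rho>) auto
    moreover have "\<sigma> * (2 * (r t)\<^sup>2 * (cos t / (\<kappa> * u t)) / s) - 2 * r t * sin t / (\<kappa> * u t)
        = 2 * r t * (r t * \<bar>cos t\<bar> - sin t * s) / (\<kappa> * u t * s)"
      unfolding sign[OF t, symmetric] using \<open>0 < u t\<close> \<open>0 < s\<close> kappa_pos
      by (simp add: field_simps power2_eq_square)
    moreover have "sin t * s < r t * \<bar>cos t\<bar>"
      unfolding s_def using sin_t r_t by (intro sin_mult_sqrt_less) auto
    ultimately show "\<exists>y. (?H has_real_derivative y) (at t) \<and> 0 < y"
      using G \<open>0 < s\<close> \<open>0 < r t\<close> by auto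
  qed
  then show ?thesis by (simp add: mult.assoc)
qed

lemma volume_less_acute:
  assumes \<gamma>: "0 < \<gamma>" "\<gamma> \<le> pi/2"
  shows "V \<gamma> < (r \<gamma>)\<^sup>2 / (sin \<gamma>)\<^sup>2 * (\<gamma> - sin \<gamma> * cos \<gamma>)"
proof -
  define \<rho> where "\<rho> = r \<gamma> / sin \<gamma>"
  have sin_\<gamma>: "0 < sin \<gamma>" using \<gamma> by (simp add: sin_gt_zero)
  have r_\<gamma>: "r \<gamma> = \<rho> * sin \<gamma>" using sin_\<gamma> by (simp add: \<rho>_def)
  have \<rho>: "0 < \<rho>" using r_pos[of \<gamma>] sin_\<gamma> \<gamma> by (simp add: \<rho>_def)
  have "r \<gamma> \<le> \<rho>" using r_\<gamma> \<rho> by (simp add: mult_left_le)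
  have "1 * \<rho>\<^sup>2 * circular_segment (r 0 / \<rho>) - V 0
      < 1 * \<rho>\<^sup>2 * circular_segment (r \<gamma> / \<rho>) - V \<gamma>"
  proof (rule volume_defect_strict_mono)
    fix t assume t: "0 \<le> t" "t \<le> \<gamma>"
    show "0 \<le> r t \<and> r t \<le> \<rho>"
      using r_mono[of 0 t] r_mono[of t \<gamma>] r_zero \<open>r \<gamma> \<le> \<rho>\<close> t \<gamma> by auto
  next
    fix t assume t: "0 < t" "t < \<gamma>"
    have "\<rho> * sin t * sin \<gamma> < r t * sin \<gamma>"
      using r_div_sin_strict_antimono[of t \<gamma>] r_\<gamma> t \<gamma> by (simp add: mult_ac)
    then show "\<rho> * sin t < r t \<and> r t < \<rho>"
      using sin_\<gamma> r_strict_mono[of t \<gamma>] \<open>r \<gamma> \<le> \<rho>\<close> t \<gamma> by simp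
    show "1 * cos t = \<bar>cos t\<bar>" using cos_gt_zero[of t] t \<gamma> by simp
  qed (use \<gamma> \<rho> in auto)
  moreover have "V 0 = 0" by (simp add: channel_volume_def r_zero)
  moreover have "circular_segment (r 0 / \<rho>) = 0" by (simp add: circular_segment_def r_zero)
  moreover have "circular_segment (r \<gamma> / \<rho>) = \<gamma> - sin \<gamma> * cos \<gamma>"
    using r_\<gamma> \<rho> \<gamma> by (simp add: circular_segment_sin)
  moreover have "\<rho>\<^sup>2 = (r \<gamma>)\<^sup>2 / (sin \<gamma>)\<^sup>2" by (simp add: \<rho>_def power_divide)
  ultimately show ?thesis by simp
qed

lemma volume_less_obtuse:
  assumes \<gamma>: "pi/2 \<le> \<gamma>" "\<gamma> \<le> pi"
  shows "V \<gamma> < (r (pi/2))\<^sup>2 * (\<gamma> - sin \<gamma> * cos \<gamma>)"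
proof (cases "\<gamma> = pi/2")
  case True
  show ?thesis using volume_less_acute[of "pi/2"] by (simp add: True)
next
  case False
  define R where "R = r (pi/2)"
  have R: "0 < R" using r_pos[of "pi/2"] by (simp add: R_def)
  have "(-1) * R\<^sup>2 * circular_segment (r (pi/2) / R) - V (pi/2)
      < (-1) * R\<^sup>2 * circular_segment (r \<gamma> / R) - V \<gamma>"
  proof (rule volume_defect_strict_mono)
    fix t assume t: "pi/2 \<le> t" "t \<le> \<gamma>"
    show "0 \<le> r t \<and> r t \<le> R"
      using r_pos[of t] r_antimono[of "pi/2" t] t \<gamma> pi_gt_zero unfolding R_def by auto
  next
    fix t assume t: "pi/2 < t" "t < \<gamma>"
    show "R * sin t < r t \<and> r t < R"
      using R_mult_sin_less_r[of t] r_strict_antimono[of "pi/2" t] t \<gamma> unfolding R_def by auto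
    show "-1 * cos t = \<bar>cos t\<bar>" using cos_lt_zero[of t] t \<gamma> by simp
  qed (use \<gamma> R False in auto)
  moreover have "circular_segment (r (pi/2) / R) = pi/2"
    using R by (simp add: R_def circular_segment_def)
  ultimately have "V \<gamma> < V (pi/2) + R\<^sup>2 * (pi/2) - R\<^sup>2 * circular_segment (r \<gamma> / R)"
    by simp
  also have "\<dots> \<le> V (pi/2) + R\<^sup>2 * (pi/2) - R\<^sup>2 * circular_segment (sin \<gamma>)"
  proof -
    have "sin \<gamma> \<le> r \<gamma> / R"
      using R_mult_sin_less_r[of \<gamma>] R False \<gamma> by (simp add: R_def field_simps)
    moreover have "r \<gamma> / R \<le> 1"
      using r_strict_antimono[of "pi/2" \<gamma>] R False \<gamma> by (simp add: R_def)
    ultimately show ?thesis by (simp add: mult_left_mono circular_segment_mono)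
  qed
  also have "\<dots> = V (pi/2) - R\<^sup>2 * (pi/2) + R\<^sup>2 * (\<gamma> - sin \<gamma> * cos \<gamma>)"
    by (simp add: circular_segment_sin_obtuse[OF \<gamma>] algebra_simps)
  also have "\<dots> < R\<^sup>2 * (\<gamma> - sin \<gamma> * cos \<gamma>)"
    using volume_less_acute[of "pi/2"] by (simp add: R_def)
  finally show ?thesis unfolding R_def .
qed

end

theorem mainTheorem13:
  fixes \<kappa> u0 :: real and r u :: "real \<Rightarrow> real"
  assumes "\<kappa> > 0" and "u0 > 0"
    and "kappa_profile \<kappa> u0 r u"
  shows "(\<forall>\<gamma>. 0 < \<gamma> \<and> \<gamma> \<le> pi/2 \<longrightarrow>
           channel_volume \<kappa> r u \<gamma> < (r \<gamma>)\<^sup>2 / (sin \<gamma>)\<^sup>2 * (\<gamma> - sin \<gamma> * cos \<gamma>)) \<and>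
         (\<forall>\<gamma>. pi/2 \<le> \<gamma> \<and> \<gamma> \<le> pi \<longrightarrow>
           channel_volume \<kappa> r u \<gamma> < (r (pi/2))\<^sup>2 * (\<gamma> - sin \<gamma> * cos \<gamma>))"
proof -
  interpret channel_profile \<kappa> u0 r u
    using assms by unfold_locales
  show ?thesis using volume_less_acute volume_less_obtuse by auto
qed

end
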